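(* Let $G$ be an abelian group and $A$ an algebra in ${}^{G}_{G}\mathcal{YD}$ which is semisimple as a $\mathbb{C}$-algebra. Let $K\subset A$ be a central subfield which is invariant (i.e. $G$-fixed and of trivial $G$-degree) and over which $A$ is finite-dimensional. Then $A$ is projective as a right module over $A^{\underline{op}}\underline{\otimes}_K A$, where $A$ is a module via $m\cdot(a\otimes b)=(m_{-1}\cdot a)m_0b$.
   Context: ${}^{G}_{G}\mathcal{YD}$ is the category of Yetter–Drinfeld modules over $\mathbb{C}G$: $G$-modules with a $\mathbb{C}G$-coaction $v\mapsto v_{-1}\otimes v_0$ (for $G$ abelian, action and coaction commute), with braiding $v\otimes w\mapsto (v_{-1}w)\otimes v_0$. For algebras $A,B$ in this category, the braided tensor product $A\underline{\otimes}B$ has product $(a\otimes b)(a'\otimes b')=a(b_{-1}a')\otimes b_0b'$; $A^{\underline{op}}$ is $A$ with product $a\cdot_{\underline{op}}b=(a_{-1}b)a_0$; $A^{\underline{op}}\underline{\otimes}_KA$ is the analogous braided tensor product over $K$. *)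

theory Defs
  imports Complex_Main
begin

text \<open>
The abelian group G is a type 'g of class ab_group_add (written
additively).  The coaction of CG on A,
v |-> v_(-1) (x) v_0 = Sum_g g (x) cmp g v, is recorded by its coefficient maps
cmp g with respect to the basis G of CG (literal unfolding of a CG-comodule).
\<close>

definition gsupp :: "('g \<Rightarrow> 'a::zero \<Rightarrow> 'a) \<Rightarrow> 'a \<Rightarrow> 'g set" where
  "gsupp cmp x = {g. cmp g x \<noteq> 0}"

definition complex_algebra :: "(complex \<Rightarrow> 'a::ring_1 \<Rightarrow> 'a) \<Rightarrow> bool" where
  "complex_algebra sc \<longleftrightarrow> vector_space sc \<and>
     (\<forall>c x y. sc c (x * y) = sc c x * y \<and> sc c (x * y) = x * sc c y)"

definition YD_algebra ::
  "(complex \<Rightarrow> 'a::ring_1 \<Rightarrow> 'a) \<Rightarrow> ('g::ab_group_add \<Rightarrow> 'a \<Rightarrow> 'a) \<Rightarrow> ('g \<Rightarrow> 'a \<Rightarrow> 'a) \<Rightarrow> bool" where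
  "YD_algebra sc act cmp \<longleftrightarrow> complex_algebra sc \<and>
     \<comment> \<open>linear G-action\<close>
     (\<forall>x. act 0 x = x) \<and> (\<forall>g h x. act (g + h) x = act g (act h x)) \<and>
     (\<forall>g x y. act g (x + y) = act g x + act g y) \<and> (\<forall>g c x. act g (sc c x) = sc c (act g x)) \<and>
     \<comment> \<open>CG-comodule: linear, finitely supported, counital, coassociative\<close>
     (\<forall>g x y. cmp g (x + y) = cmp g x + cmp g y) \<and> (\<forall>g c x. cmp g (sc c x) = sc c (cmp g x)) \<and>
     (\<forall>x. finite (gsupp cmp x)) \<and>
     (\<forall>x. (\<Sum>g\<in>gsupp cmp x. cmp g x) = x) \<and>
     (\<forall>g h x. cmp g (cmp h x) = (if g = h then cmp g x else 0)) \<and>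
     \<comment> \<open>Yetter-Drinfeld compatibility (G abelian): action and coaction commute\<close>
     (\<forall>g h x. cmp g (act h x) = act h (cmp g x)) \<and>
     \<comment> \<open>multiplication and unit are G-module maps\<close>
     (\<forall>g x y. act g (x * y) = act g x * act g y) \<and> (\<forall>g. act g 1 = 1) \<and>
     \<comment> \<open>multiplication and unit are CG-comodule maps\<close>
     (\<forall>k x y. cmp k (x * y) = (\<Sum>g\<in>gsupp cmp x. cmp g x * cmp (k - g) y)) \<and>
     (\<forall>g. cmp g 1 = (if g = 0 then 1 else 0))"

definition left_ideal :: "'a::ring_1 set \<Rightarrow> bool" where
  "left_ideal L \<longleftrightarrow> 0 \<in> L \<and> (\<forall>x\<in>L. \<forall>y\<in>L. x + y \<in> L) \<and> (\<forall>x\<in>L. - x \<in> L) \<and>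
     (\<forall>a. \<forall>x\<in>L. a * x \<in> L)"

definition semisimple_ring :: "'a::ring_1 itself \<Rightarrow> bool" where
  "semisimple_ring T \<longleftrightarrow> (\<forall>L::'a set. left_ideal L \<longrightarrow>
     (\<exists>L'. left_ideal L' \<and> L \<inter> L' = {0} \<and> (\<forall>x. \<exists>y\<in>L. \<exists>z\<in>L'. x = y + z)))"

definition central_subfield :: "(complex \<Rightarrow> 'a::ring_1 \<Rightarrow> 'a) \<Rightarrow> 'a set \<Rightarrow> bool" where
  "central_subfield sc K \<longleftrightarrow> (1::'a) \<noteq> 0 \<and> 0 \<in> K \<and> 1 \<in> K \<and>
     (\<forall>x\<in>K. \<forall>y\<in>K. x + y \<in> K \<and> x * y \<in> K) \<and> (\<forall>x\<in>K. - x \<in> K) \<and>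
     (\<forall>x\<in>K. x \<noteq> 0 \<longrightarrow> (\<exists>y\<in>K. x * y = 1)) \<and>
     (\<forall>c. \<forall>x\<in>K. sc c x \<in> K) \<and>
     (\<forall>x\<in>K. \<forall>a. x * a = a * x)"

definition invariant_set :: "('g::ab_group_add \<Rightarrow> 'a::ring_1 \<Rightarrow> 'a) \<Rightarrow> ('g \<Rightarrow> 'a \<Rightarrow> 'a) \<Rightarrow> 'a set \<Rightarrow> bool" where
  "invariant_set act cmp K \<longleftrightarrow> (\<forall>g. \<forall>x\<in>K. act g x = x) \<and> (\<forall>x\<in>K. cmp 0 x = x)"

definition finite_dim_over :: "'a::ring_1 set \<Rightarrow> bool" where
  "finite_dim_over K \<longleftrightarrow> (\<exists>S. finite S \<and> (\<forall>a. \<exists>c. (\<forall>s\<in>S. c s \<in> K) \<and> a = (\<Sum>s\<in>S. c s * s)))"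

text \<open>Braided opposite product: a \<cdot>op b = (a_(-1) b) a_0.\<close>
definition bop :: "('g \<Rightarrow> 'a::ring_1 \<Rightarrow> 'a) \<Rightarrow> ('g \<Rightarrow> 'a \<Rightarrow> 'a) \<Rightarrow> 'a \<Rightarrow> 'a \<Rightarrow> 'a" where
  "bop act cmp a b = (\<Sum>h\<in>gsupp cmp a. act h b * cmp h a)"

text \<open>
Right module over B = A^op (braided tensor over K) A.  The map rho n a b stands for
n . (a (x) b).  B is spanned by pure tensors subject to biadditivity and K-balancing,
with product (a (x) b)(a' (x) b') = a \<cdot>op (b_(-1) a') (x) b_0 b'; so a right B-module
on an abelian group 'm is exactly such a rho, additive in n, biadditive and
K-balanced in (a,b), unital and associative on pure tensors.
\<close>
definition is_rmod ::
  "('g \<Rightarrow> 'a::ring_1 \<Rightarrow> 'a) \<Rightarrow> ('g \<Rightarrow> 'a \<Rightarrow> 'a) \<Rightarrow> 'a set \<Rightarrow> ('m::ab_group_add \<Rightarrow> 'a \<Rightarrow> 'a \<Rightarrow> 'm) \<Rightarrow> bool" where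
  "is_rmod act cmp K rho \<longleftrightarrow>
     (\<forall>n n' a b. rho (n + n') a b = rho n a b + rho n' a b) \<and>
     (\<forall>n a a' b. rho n (a + a') b = rho n a b + rho n a' b) \<and>
     (\<forall>n a b b'. rho n a (b + b') = rho n a b + rho n a b') \<and>
     (\<forall>n a b. \<forall>k\<in>K. rho n (bop act cmp a k) b = rho n a (k * b)) \<and>
     (\<forall>n. rho n 1 1 = n) \<and>
     (\<forall>n a b a' b'. rho (rho n a b) a' b' =
        (\<Sum>g\<in>gsupp cmp b. rho n (bop act cmp a (act g a')) (cmp g b * b')))"

definition rhom :: "('m::ab_group_add \<Rightarrow> 'a \<Rightarrow> 'a \<Rightarrow> 'm) \<Rightarrow> ('n::ab_group_add \<Rightarrow> 'a \<Rightarrow> 'a \<Rightarrow> 'n) \<Rightarrow> ('m \<Rightarrow> 'n) \<Rightarrow> bool" where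
  "rhom rho sigma f \<longleftrightarrow> (\<forall>x y. f (x + y) = f x + f y) \<and> (\<forall>n a b. f (rho n a b) = sigma (f n) a b)"

text \<open>
Projective right B-module: lifting property against all surjective B-module maps
between right B-modules whose underlying groups are the types 'm and 'n (these type
variables are arbitrary, hence universally quantified in any theorem using this).
\<close>
definition projective_rmod ::
  "'m::ab_group_add itself \<Rightarrow> 'n::ab_group_add itself \<Rightarrow> ('g \<Rightarrow> 'a::ring_1 \<Rightarrow> 'a) \<Rightarrow> ('g \<Rightarrow> 'a \<Rightarrow> 'a) \<Rightarrow> 'a set \<Rightarrow>
   ('p::ab_group_add \<Rightarrow> 'a \<Rightarrow> 'a \<Rightarrow> 'p) \<Rightarrow> bool" where
  "projective_rmod tm tn act cmp K rhoP \<longleftrightarrow> is_rmod act cmp K rhoP \<and>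
     (\<forall>(rhoN :: 'm \<Rightarrow> 'a \<Rightarrow> 'a \<Rightarrow> 'm) (rhoN' :: 'n \<Rightarrow> 'a \<Rightarrow> 'a \<Rightarrow> 'n) p f.
        is_rmod act cmp K rhoN \<and> is_rmod act cmp K rhoN' \<and> rhom rhoN rhoN' p \<and> surj p \<and>
        rhom rhoP rhoN' f \<longrightarrow> (\<exists>h. rhom rhoP rhoN h \<and> (\<forall>x. p (h x) = f x)))"

definition reg_action :: "('g \<Rightarrow> 'a::ring_1 \<Rightarrow> 'a) \<Rightarrow> ('g \<Rightarrow> 'a \<Rightarrow> 'a) \<Rightarrow> 'a \<Rightarrow> 'a \<Rightarrow> 'a \<Rightarrow> 'a" where
  "reg_action act cmp m a b = (\<Sum>g\<in>gsupp cmp m. act g a * cmp g m * b)"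

end

theory Submission
  imports Defs "HOL-Algebra.Embedded_Algebras"
begin

text \<open>
Let \<open>\<tau>(z)\<close> be the trace over K of left multiplication by z. As A is semisimple and of
characteristic 0, \<open>\<tau>\<close> is nondegenerate: its radical is a left ideal, and a nonzero idempotent
e in it would satisfy \<open>\<tau>(e) = rank(x \<mapsto> e x) \<noteq> 0\<close>. Choose a K-basis of homogeneous elements
\<open>b\<^sub>i\<close> of degrees \<open>d\<^sub>i\<close>; since \<open>\<tau>\<close> vanishes outside degree 0, the \<open>\<tau>\<close>-dual basis \<open>b\<^sup>i\<close> can be
taken homogeneous of degree \<open>-d\<^sub>i\<close>. The Casimir element \<open>c = \<Sum> b\<^sup>i b\<^sub>i\<close> is central, of degree 0,
and invertible (semisimplicity again, now with right multiplications), so \<open>u\<^sub>i = c\<^sup>-\<^sup>1 b\<^sup>i\<close> gives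
\<open>\<Sum> u\<^sub>i b\<^sub>i = 1\<close> and \<open>\<Sum> x u\<^sub>i \<otimes> b\<^sub>i = \<Sum> u\<^sub>i \<otimes> b\<^sub>i x\<close>: a separability idempotent of degree 0.

Because the degrees of \<open>u\<^sub>i\<close> and \<open>b\<^sub>i\<close> cancel, the braiding drops out and
\<open>n \<mapsto> \<Sum> n\<cdot>(u\<^sub>i \<otimes> b\<^sub>i)\<close> projects every module onto its invariants
\<open>{z | z\<cdot>(x \<otimes> 1) = z\<cdot>(1 \<otimes> x)}\<close>, compatibly with module maps. A module map f out of A is
determined by the invariant f(1), and an invariant z defines the module map \<open>m \<mapsto> z\<cdot>(1 \<otimes> m)\<close>.
To lift f along a surjection p, lift f(1) to some n and average n.
\<close>

section \<open>Linear algebra over a central subfield\<close>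

definition univ_ring :: "'a::ring_1 ring" where
  "univ_ring = \<lparr>carrier = UNIV, monoid.mult = (*), one = 1, zero = 0, add = (+)\<rparr>"

lemma univ_ring_simps [simp]:
  "carrier univ_ring = UNIV" "monoid.mult univ_ring = (*)" "one univ_ring = 1"
  "zero univ_ring = 0" "add univ_ring = (+)"
  by (simp_all add: univ_ring_def)

lemma ring_univ_ring: "ring (univ_ring :: 'a::ring_1 ring)"
  unfolding univ_ring_def
  by unfold_locales (auto simp: algebra_simps Units_def intro: exI[of _ "- _"])

definition lincomb :: "(nat \<Rightarrow> 'a::ring_1) \<Rightarrow> 'a list \<Rightarrow> 'a" where
  "lincomb c us = (\<Sum>i<length us. c i * us ! i)"

definition lin_span :: "'a::ring_1 set \<Rightarrow> 'a list \<Rightarrow> 'a set" where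
  "lin_span K us = {lincomb c us | c. \<forall>i<length us. c i \<in> K}"

definition lin_indep :: "'a::ring_1 set \<Rightarrow> 'a list \<Rightarrow> bool" where
  "lin_indep K us \<longleftrightarrow>
     (\<forall>c. (\<forall>i<length us. c i \<in> K) \<longrightarrow> lincomb c us = 0 \<longrightarrow> (\<forall>i<length us. c i = 0))"

definition is_basis :: "'a::ring_1 set \<Rightarrow> 'a list \<Rightarrow> bool" where
  "is_basis K bs \<longleftrightarrow> lin_indep K bs \<and> lin_span K bs = UNIV"

definition K_linear :: "'a::ring_1 set \<Rightarrow> ('a \<Rightarrow> 'a) \<Rightarrow> bool" where
  "K_linear K T \<longleftrightarrow> additive T \<and> (\<forall>k\<in>K. \<forall>x. T (k * x) = k * T x)"

lemma a_inv_univ_ring [simp]: "a_inv univ_ring x = - (x::'a::ring_1)"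
proof -
  interpret ring "univ_ring :: 'a ring" by (rule ring_univ_ring)
  show ?thesis using minus_equality[of "- x" x] by simp
qed

lemma K_linear_additive: "K_linear K T \<Longrightarrow> additive T"
  by (simp add: K_linear_def)

lemma K_linear_K_mult: "K_linear K T \<Longrightarrow> k \<in> K \<Longrightarrow> T (k * x) = k * T x"
  by (simp add: K_linear_def)

lemma lincomb_Nil [simp]: "lincomb c [] = 0"
  by (simp add: lincomb_def)

lemma lincomb_Cons: "lincomb c (u # us) = c 0 * u + lincomb (\<lambda>i. c (Suc i)) us"
  unfolding lincomb_def by (simp add: sum.lessThan_Suc_shift del: sum.lessThan_Suc)

lemma lincomb_cong: "(\<And>i. i < length us \<Longrightarrow> c i = d i) \<Longrightarrow> lincomb c us = lincomb d us"
  unfolding lincomb_def by (rule sum.cong) auto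

lemma lincomb_add: "lincomb c us + lincomb d us = lincomb (\<lambda>i. c i + d i) us"
  unfolding lincomb_def by (simp add: sum.distrib distrib_right)

lemma lincomb_diff: "lincomb c us - lincomb d us = lincomb (\<lambda>i. c i - d i) us"
  unfolding lincomb_def by (simp add: sum_subtractf left_diff_distrib)

lemma mult_lincomb: "k * lincomb c us = lincomb (\<lambda>i. k * c i) us"
  unfolding lincomb_def by (simp add: sum_distrib_left mult.assoc)

lemma lincomb_append: "lincomb c (vs @ ws) = lincomb c vs + lincomb (\<lambda>i. c (length vs + i)) ws"
  by (induct vs arbitrary: c) (simp_all add: lincomb_Cons add.assoc)

lemma lincomb_unit_vector: "j < length us \<Longrightarrow> lincomb (\<lambda>i. if i = j then 1 else 0) us = us ! j"
  unfolding lincomb_def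
  by (subst sum.cong[OF refl, of _ _ "\<lambda>i. if i = j then us ! i else 0"]) auto

lemma lin_span_append:
  assumes "x \<in> lin_span K vs" "y \<in> lin_span K ws"
  shows "x + y \<in> lin_span K (vs @ ws)"
proof -
  obtain c d where c: "\<forall>i<length vs. c i \<in> K" "x = lincomb c vs"
    and d: "\<forall>i<length ws. d i \<in> K" "y = lincomb d ws"
    using assms unfolding lin_span_def by blast
  define e where "e i = (if i < length vs then c i else d (i - length vs))" for i
  have "x + y = lincomb e (vs @ ws)"
    unfolding lincomb_append c(2) d(2) e_def by (intro arg_cong2[where f = "(+)"] lincomb_cong) simp_all
  moreover have "\<forall>i<length (vs @ ws). e i \<in> K"
    using c(1) d(1) unfolding e_def by auto
  ultimately show ?thesis unfolding lin_span_def by blast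
qed

locale central_field =
  fixes K :: "'a::ring_1 set"
  assumes K_zero: "0 \<in> K" and K_one: "1 \<in> K"
    and K_add: "x \<in> K \<Longrightarrow> y \<in> K \<Longrightarrow> x + y \<in> K"
    and K_mult: "x \<in> K \<Longrightarrow> y \<in> K \<Longrightarrow> x * y \<in> K"
    and K_uminus: "x \<in> K \<Longrightarrow> - x \<in> K"
    and K_inverse: "x \<in> K \<Longrightarrow> x \<noteq> 0 \<Longrightarrow> \<exists>y\<in>K. x * y = 1"
    and K_central: "x \<in> K \<Longrightarrow> x * a = a * x"
begin

sublocale R: ring "univ_ring :: 'a ring"
  by (rule ring_univ_ring)

lemma K_diff: "x \<in> K \<Longrightarrow> y \<in> K \<Longrightarrow> x - y \<in> K"
  using K_add[OF _ K_uminus[of y]] by simp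

lemma K_sum: "(\<And>a. a \<in> A \<Longrightarrow> f a \<in> K) \<Longrightarrow> sum f A \<in> K"
  by (induct A rule: infinite_finite_induct) (auto intro: K_zero K_add)

lemma K_left_commute: "k \<in> K \<Longrightarrow> x * (k * y) = k * (x * y)"
  by (metis K_central mult.assoc)

lemma subfield_univ_ring: "subfield K univ_ring"
proof -
  have "subcring K univ_ring"
    by (intro R.subcringI R.subringI) (auto intro: K_one K_uminus K_mult K_add K_central)
  moreover have "Units (univ_ring\<lparr>carrier := K\<rparr>) = K - {\<zero>\<^bsub>univ_ring\<^esub>}"
  proof
    show "Units (univ_ring\<lparr>carrier := K\<rparr>) \<subseteq> K - {\<zero>\<^bsub>univ_ring\<^esub>}"
      by (auto simp: Units_def)
    show "K - {\<zero>\<^bsub>univ_ring\<^esub>} \<subseteq> Units (univ_ring\<lparr>carrier := K\<rparr>)"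
    proof
      fix x assume x: "x \<in> K - {\<zero>\<^bsub>univ_ring\<^esub>}"
      then obtain y where y: "y \<in> K" "x * y = 1"
        using K_inverse by auto
      moreover have "y * x = 1"
        using K_central[OF y(1), of x] y(2) by simp
      ultimately show "x \<in> Units (univ_ring\<lparr>carrier := K\<rparr>)"
        using x by (auto simp: Units_def)
    qed
  qed
  ultimately show ?thesis
    by (rule R.subfieldI)
qed

lemma combine_eq_lincomb: "R.combine Ks Us = lincomb (\<lambda>i. if i < length Ks then Ks ! i else 0) Us"
proof (induct Ks Us rule: R.combine.induct)
  case (1 k Ks u Us)
  then show ?case by (simp add: lincomb_Cons) (rule lincomb_cong, simp)
qed (simp_all add: lincomb_def)

lemma Span_eq_lin_span: "R.Span K Us = lin_span K Us"
proof -
  let ?c = "\<lambda>Ks i. if i < length Ks then Ks ! i else 0"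
  have "R.Span K Us = {R.combine Ks Us |Ks. length Ks = length Us \<and> set Ks \<subseteq> K}"
    by (rule R.Span_eq_combine_set_length_version[OF subfield_univ_ring]) simp
  also have "\<dots> = lin_span K Us"
  proof (intro equalityI subsetI)
    fix x assume "x \<in> {R.combine Ks Us |Ks. length Ks = length Us \<and> set Ks \<subseteq> K}"
    then obtain Ks where "length Ks = length Us" "set Ks \<subseteq> K" "x = R.combine Ks Us"
      by blast
    then show "x \<in> lin_span K Us"
      unfolding lin_span_def combine_eq_lincomb by (auto intro!: exI[of _ "?c Ks"])
  next
    fix x assume "x \<in> lin_span K Us"
    then obtain c where c: "\<forall>i<length Us. c i \<in> K" "x = lincomb c Us"
      unfolding lin_span_def by blast
    then have "x = R.combine (map c [0..<length Us]) Us \<and> set (map c [0..<length Us]) \<subseteq> K"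
      by (auto simp: combine_eq_lincomb cong: lincomb_cong)
    then show "x \<in> {R.combine Ks Us |Ks. length Ks = length Us \<and> set Ks \<subseteq> K}"
      by (intro CollectI exI[of _ "map c [0..<length Us]"]) (simp del: R.combine.simps)
  qed
  finally show ?thesis .
qed

lemma independent_iff_lin_indep: "R.independent K Us \<longleftrightarrow> lin_indep K Us"
proof
  assume ind: "R.independent K Us"
  show "lin_indep K Us" unfolding lin_indep_def
  proof (intro allI impI)
    fix c i assume c: "\<forall>i<length Us. c i \<in> K" and "lincomb c Us = 0" and i: "i < length Us"
    then have "R.combine (map c [0..<length Us]) Us = 0"
      by (simp add: combine_eq_lincomb cong: lincomb_cong)
    moreover have "set (map c [0..<length Us]) \<subseteq> K"
      using c by auto
    ultimately have "set (take (length Us) (map c [0..<length Us])) \<subseteq> {0}"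
      using R.independent_imp_trivial_combine[OF subfield_univ_ring ind, of "map c [0..<length Us]"]
      by (simp del: R.combine.simps)
    then show "c i = 0" using i by (auto simp: image_subset_iff)
  qed
next
  assume ind: "lin_indep K Us"
  show "R.independent K Us"
  proof (rule R.trivial_combine_imp_independent[OF subfield_univ_ring])
    fix Ks assume Ks: "set Ks \<subseteq> K" "R.combine Ks Us = \<zero>\<^bsub>univ_ring\<^esub>"
    define c where "c i = (if i < length Ks then Ks ! i else 0)" for i
    have "\<forall>i<length Us. c i \<in> K" using Ks(1) K_zero unfolding c_def by (auto dest: nth_mem)
    moreover have "lincomb c Us = 0" using Ks(2) unfolding c_def combine_eq_lincomb by simp
    ultimately have "\<forall>i<length Us. c i = 0" using ind unfolding lin_indep_def by blast
    then show "set (take (length Us) Ks) \<subseteq> {\<zero>\<^bsub>univ_ring\<^esub>}"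
    proof (intro subsetI)
      fix k assume "k \<in> set (take (length Us) Ks)"
      then obtain i where "i < length Us" "i < length Ks" "k = Ks ! i"
        by (auto simp: set_conv_nth)
      then show "k \<in> {\<zero>\<^bsub>univ_ring\<^esub>}"
        using \<open>\<forall>i<length Us. c i = 0\<close> unfolding c_def by auto
    qed
  qed simp
qed

lemma exists_basis_sublist:
  "\<exists>vs. set vs \<subseteq> set us \<and> lin_indep K vs \<and> lin_span K vs = lin_span K us"
proof -
  have "\<exists>vs. set vs \<subseteq> set us \<and> R.independent K vs \<and> R.Span K vs = R.Span K us"
  proof (induction us)
    case (Cons u us)
    then obtain vs where vs: "set vs \<subseteq> set us" "R.independent K vs" "R.Span K vs = R.Span K us"
      by auto
    show ?case
    proof (cases "u \<in> R.Span K us")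
      case True
      then have "R.Span K (u # us) = R.Span K us"
        using R.Span_base_incl[OF subfield_univ_ring, of us]
          R.mono_Span_subset[OF subfield_univ_ring, of "u # us" us]
          R.mono_Span[OF subfield_univ_ring, of us u]
        by (simp del: R.Span.simps)
      then show ?thesis using vs by (metis set_subset_Cons subset_trans)
    next
      case False
      then have "R.independent K (u # vs)"
        using R.li_Cons[of u K vs] vs by (simp del: R.Span.simps)
      moreover have "R.Span K (u # vs) = R.Span K (u # us)"
        using vs(3) by (simp only: R.Span.simps foldr_Cons o_apply)
      ultimately show ?thesis using vs(1) by (metis insert_mono list.set(2))
    qed
  qed simp
  then show ?thesis by (simp only: Span_eq_lin_span independent_iff_lin_indep)
qed

lemma K_linear_lincomb:
  assumes "K_linear K T" "\<forall>i<length us. c i \<in> K"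
  shows "T (lincomb c us) = lincomb c (map T us)"
  using assms(2)
proof (induct us arbitrary: c)
  case Nil
  then show ?case using additive.zero[OF K_linear_additive[OF assms(1)]] by simp
next
  case (Cons u us)
  then show ?case
    by (simp add: lincomb_Cons additive.add[OF K_linear_additive[OF assms(1)]] K_linear_K_mult[OF assms(1)])
qed

lemma K_linear_inj_imp_surj:
  assumes basis: "is_basis K bs" and T: "K_linear K T" and inj: "\<And>x. T x = 0 \<Longrightarrow> x = 0"
  shows "surj T"
proof -
  have dim: "R.dimension (length bs) K UNIV"
    using basis by (intro R.dimensionI[OF subfield_univ_ring])
      (simp_all add: is_basis_def independent_iff_lin_indep Span_eq_lin_span del: R.Span.simps)
  have "lin_indep K (map T bs)" unfolding lin_indep_def
  proof (intro allI impI)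
    fix c i assume c: "\<forall>i<length (map T bs). c i \<in> K" and "lincomb c (map T bs) = 0"
      and i: "i < length (map T bs)"
    then have "lincomb c bs = 0" using inj K_linear_lincomb[OF T] by simp
    then show "c i = 0" using basis c i unfolding is_basis_def lin_indep_def by simp
  qed
  then have span: "lin_span K (map T bs) = UNIV"
    using R.independent_length_eq_dimension[OF subfield_univ_ring dim, of "map T bs"]
    by (simp add: independent_iff_lin_indep Span_eq_lin_span del: R.Span.simps)
  show ?thesis unfolding surj_def
  proof
    fix y
    obtain c where "\<forall>i<length bs. c i \<in> K" "y = lincomb c (map T bs)"
      using span unfolding lin_span_def by auto
    then have "y = T (lincomb c bs)" using K_linear_lincomb[OF T] by simp
    then show "\<exists>x. y = T x" ..
  qed
qed

lemma K_linear_mult_left: "K_linear K (\<lambda>w. z * w)"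
  by (simp add: K_linear_def additive_def distrib_left K_left_commute)

lemma K_linear_mult_right: "K_linear K (\<lambda>w. w * z)"
  by (simp add: K_linear_def additive_def distrib_right mult.assoc)

lemma lin_span_zero: "0 \<in> lin_span K us"
  unfolding lin_span_def using K_zero by (auto intro!: exI[of _ "\<lambda>_. 0"] simp: lincomb_def)

lemma lin_span_add: "x \<in> lin_span K us \<Longrightarrow> y \<in> lin_span K us \<Longrightarrow> x + y \<in> lin_span K us"
  unfolding lin_span_def by (auto simp: lincomb_add K_add)

lemma lin_span_mult: "k \<in> K \<Longrightarrow> x \<in> lin_span K us \<Longrightarrow> k * x \<in> lin_span K us"
  unfolding lin_span_def by (auto simp: mult_lincomb K_mult)

lemma lin_span_sum: "(\<And>a. a \<in> A \<Longrightarrow> f a \<in> lin_span K us) \<Longrightarrow> sum f A \<in> lin_span K us"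
  by (induct A rule: infinite_finite_induct) (auto simp: lin_span_zero lin_span_add)

lemma mem_lin_span:
  assumes "u \<in> set us"
  shows "u \<in> lin_span K us"
proof -
  obtain j where "j < length us" "u = us ! j"
    using assms by (auto simp: in_set_conv_nth)
  then have "u = lincomb (\<lambda>i. if i = j then 1 else 0) us"
    by (simp add: lincomb_unit_vector)
  moreover have "\<forall>i<length us. (if i = j then 1 else 0) \<in> K"
    using K_zero K_one by simp
  ultimately show ?thesis unfolding lin_span_def by blast
qed

lemma lin_indep_append_projection:
  assumes P: "K_linear K P" and vs: "lin_indep K vs" and ws: "lin_indep K ws"
    and Pv: "\<forall>v\<in>set vs. P v = v" and Pw: "\<forall>w\<in>set ws. P w = 0"
  shows "lin_indep K (vs @ ws)"
  unfolding lin_indep_def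
proof (intro allI impI)
  fix c i assume c: "\<forall>i<length (vs @ ws). c i \<in> K" and z: "lincomb c (vs @ ws) = 0"
    and i: "i < length (vs @ ws)"
  define d where "d i = c (length vs + i)" for i
  have cK: "\<forall>i<length vs. c i \<in> K" "\<forall>i<length ws. d i \<in> K"
    using c unfolding d_def by auto
  have sum0: "lincomb c vs + lincomb d ws = 0"
    using z unfolding lincomb_append d_def .
  have "map P vs = vs" "map P ws = map (\<lambda>_. 0) ws"
    using Pv Pw by (simp_all add: map_idI)
  then have "P (lincomb c vs) = lincomb c vs" "P (lincomb d ws) = 0"
    using K_linear_lincomb[OF P cK(1)] K_linear_lincomb[OF P cK(2)] by (simp_all add: lincomb_def)
  then have vs0: "lincomb c vs = 0"
    using arg_cong[OF sum0, of P] additive.add[OF K_linear_additive[OF P]]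
      additive.zero[OF K_linear_additive[OF P]] by simp
  show "c i = 0"
  proof (cases "i < length vs")
    case True
    then show ?thesis using vs cK(1) vs0 unfolding lin_indep_def by blast
  next
    case False
    have "lincomb d ws = 0"
      using sum0 vs0 by simp
    then have "d (i - length vs) = 0"
      using ws cK(2) i False unfolding lin_indep_def by auto
    then show ?thesis using False unfolding d_def by simp
  qed
qed

end

section \<open>Coordinates and traces\<close>

definition coord :: "'a::ring_1 set \<Rightarrow> 'a list \<Rightarrow> 'a \<Rightarrow> nat \<Rightarrow> 'a" where
  "coord K bs x = (SOME c. (\<forall>i<length bs. c i \<in> K) \<and> x = lincomb c bs)"

definition trace :: "'a::ring_1 set \<Rightarrow> 'a list \<Rightarrow> ('a \<Rightarrow> 'a) \<Rightarrow> 'a" where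
  "trace K bs T = (\<Sum>i<length bs. coord K bs (T (bs ! i)) i)"

lemma sum_lessThan_indicator:
  assumes "n \<le> N"
  shows "(\<Sum>i<N. if i < n then 1 else 0) = (of_nat n :: 'a::semiring_1)"
proof -
  have "{..<N} \<inter> {i. i < n} = {..<n}" using assms by auto
  then show ?thesis by (simp add: sum.If_cases)
qed

locale K_basis = central_field +
  fixes bs :: "'a::ring_1 list"
  assumes basis: "is_basis K bs"
begin

lemma coord_mem_lincomb: "(\<forall>i<length bs. coord K bs x i \<in> K) \<and> x = lincomb (coord K bs x) bs"
proof -
  have "x \<in> lin_span K bs" using basis by (simp add: is_basis_def)
  then have "\<exists>c. (\<forall>i<length bs. c i \<in> K) \<and> x = lincomb c bs" unfolding lin_span_def by blast
  then show ?thesis unfolding coord_def by (rule someI_ex)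
qed

lemma coord_mem: "i < length bs \<Longrightarrow> coord K bs x i \<in> K"
  using coord_mem_lincomb by blast

lemma lincomb_coord: "lincomb (coord K bs x) bs = x"
  using coord_mem_lincomb by simp

lemma sum_coord: "(\<Sum>j<length bs. coord K bs x j * bs ! j) = x"
  using lincomb_coord by (simp add: lincomb_def)

lemma coord_lincomb:
  assumes c: "\<forall>i<length bs. c i \<in> K" and i: "i < length bs"
  shows "coord K bs (lincomb c bs) i = c i"
proof -
  have "lincomb (\<lambda>i. coord K bs (lincomb c bs) i - c i) bs = 0"
    by (simp add: lincomb_diff[symmetric] lincomb_coord)
  moreover have "\<forall>i<length bs. coord K bs (lincomb c bs) i - c i \<in> K"
    using c coord_mem by (simp add: K_diff)
  ultimately show ?thesis
    using basis i unfolding is_basis_def lin_indep_def by auto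
qed

lemma coord_eqI: "\<forall>i<length bs. c i \<in> K \<Longrightarrow> x = lincomb c bs \<Longrightarrow> i < length bs \<Longrightarrow> coord K bs x i = c i"
  using coord_lincomb by blast

lemma coord_add: "i < length bs \<Longrightarrow> coord K bs (x + y) i = coord K bs x i + coord K bs y i"
  by (rule coord_eqI) (auto simp: coord_mem K_add lincomb_add[symmetric] lincomb_coord)

lemma coord_mult: "k \<in> K \<Longrightarrow> i < length bs \<Longrightarrow> coord K bs (k * x) i = k * coord K bs x i"
  by (rule coord_eqI) (auto simp: coord_mem K_mult mult_lincomb[symmetric] lincomb_coord)

lemma additive_coord: "i < length bs \<Longrightarrow> additive (\<lambda>x. coord K bs x i)"
  by unfold_locales (rule coord_add)

lemma coord_sum: "i < length bs \<Longrightarrow> coord K bs (sum f A) i = (\<Sum>a\<in>A. coord K bs (f a) i)"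
  using additive.sum[OF additive_coord] .

lemma coord_zero: "i < length bs \<Longrightarrow> coord K bs 0 i = 0"
  using additive.zero[OF additive_coord] .

lemma coord_nth:
  "i < length bs \<Longrightarrow> j < length bs \<Longrightarrow> coord K bs (bs ! j) i = (if i = j then 1 else 0)"
  by (rule coord_eqI) (simp_all add: K_zero K_one lincomb_unit_vector)

lemma K_linear_mem_lin_span: "K_linear K T \<Longrightarrow> T x \<in> lin_span K (map T bs)"
  unfolding lin_span_def
  using K_linear_lincomb[of T bs "coord K bs x"] lincomb_coord coord_mem by fastforce

lemma coord_K_linear:
  assumes C: "is_basis K cs" and P: "K_linear K P" and i: "i < length bs"
  shows "coord K bs (P x) i = (\<Sum>j<length cs. coord K cs x j * coord K bs (P (cs ! j)) i)"
proof -
  interpret C: K_basis K cs by unfold_locales (rule C)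
  have "P x = P (lincomb (coord K cs x) cs)"
    by (simp add: C.lincomb_coord)
  also have "\<dots> = (\<Sum>j<length cs. coord K cs x j * P (cs ! j))"
    using K_linear_lincomb[OF P] C.coord_mem by (simp add: lincomb_def)
  finally show ?thesis by (simp add: coord_sum[OF i] coord_mult[OF _ i] C.coord_mem)
qed

lemma trace_add: "trace K bs (\<lambda>x. S x + T x) = trace K bs S + trace K bs T"
  unfolding trace_def by (simp add: coord_add sum.distrib)

lemma trace_mult: "k \<in> K \<Longrightarrow> trace K bs (\<lambda>x. k * T x) = k * trace K bs T"
  unfolding trace_def by (simp add: coord_mult sum_distrib_left)

lemma trace_mem: "trace K bs T \<in> K"
  unfolding trace_def by (rule K_sum) (simp add: coord_mem)

lemma trace_comp_commute:
  assumes P: "K_linear K P" and Q: "K_linear K Q"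
  shows "trace K bs (\<lambda>x. P (Q x)) = trace K bs (\<lambda>x. Q (P x))"
proof -
  let ?n = "length bs"
  have "trace K bs (\<lambda>x. P (Q x)) =
      (\<Sum>i<?n. \<Sum>j<?n. coord K bs (Q (bs ! i)) j * coord K bs (P (bs ! j)) i)"
    unfolding trace_def by (rule sum.cong) (simp_all add: coord_K_linear[OF basis P])
  also have "\<dots> = (\<Sum>j<?n. \<Sum>i<?n. coord K bs (P (bs ! j)) i * coord K bs (Q (bs ! i)) j)"
    by (subst sum.swap) (intro sum.cong refl K_central coord_mem; simp)
  also have "\<dots> = trace K bs (\<lambda>x. Q (P x))"
    unfolding trace_def by (rule sum.cong) (simp_all add: coord_K_linear[OF basis Q])
  finally show ?thesis .
qed

lemma trace_basis_indep:
  assumes C: "is_basis K cs" and T: "K_linear K T"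
  shows "trace K bs T = trace K cs T"
proof -
  interpret C: K_basis K cs by unfold_locales (rule C)
  have "trace K bs T =
      (\<Sum>i<length bs. \<Sum>j<length cs. coord K cs (bs ! i) j * coord K bs (T (cs ! j)) i)"
    unfolding trace_def by (rule sum.cong) (simp_all add: coord_K_linear[OF C T])
  also have "\<dots> = (\<Sum>j<length cs. \<Sum>i<length bs. coord K bs (T (cs ! j)) i * coord K cs (bs ! i) j)"
    by (subst sum.swap) (intro sum.cong refl K_central C.coord_mem; simp)
  also have "\<dots> = (\<Sum>j<length cs. coord K cs (\<Sum>i<length bs. coord K bs (T (cs ! j)) i * bs ! i) j)"
    by (rule sum.cong) (simp_all add: C.coord_sum C.coord_mult coord_mem)
  also have "\<dots> = trace K cs T"
    unfolding trace_def sum_coord ..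
  finally show ?thesis .
qed

lemma idempotent_adapted_basis:
  assumes P: "K_linear K P" and idem: "\<And>x. P (P x) = P x"
  obtains vs ws where "is_basis K (vs @ ws)" "\<forall>v\<in>set vs. P v = v"
    "\<forall>w\<in>set ws. P w = 0" "range P \<subseteq> lin_span K vs"
proof -
  define Q where "Q x = x - P x" for x
  have Q: "K_linear K Q"
    using P unfolding K_linear_def additive_def Q_def by (auto simp: algebra_simps)
  obtain vs where vs: "set vs \<subseteq> set (map P bs)" "lin_indep K vs" "lin_span K vs = lin_span K (map P bs)"
    using exists_basis_sublist by blast
  obtain ws where ws: "set ws \<subseteq> set (map Q bs)" "lin_indep K ws" "lin_span K ws = lin_span K (map Q bs)"
    using exists_basis_sublist by blast
  have Pv: "\<forall>v\<in>set vs. P v = v"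
    using vs(1) idem by auto
  have Pw: "\<forall>w\<in>set ws. P w = 0"
    using ws(1) idem additive.diff[OF K_linear_additive[OF P]] unfolding Q_def by auto
  have range: "range P \<subseteq> lin_span K vs"
    using K_linear_mem_lin_span[OF P] vs(3) by auto
  have "x \<in> lin_span K (vs @ ws)" for x
  proof -
    have "Q x \<in> lin_span K ws" using K_linear_mem_lin_span[OF Q] ws(3) by auto
    then have "P x + Q x \<in> lin_span K (vs @ ws)" using range by (auto intro: lin_span_append)
    then show "x \<in> lin_span K (vs @ ws)" by (simp add: Q_def)
  qed
  then have "is_basis K (vs @ ws)"
    using lin_indep_append_projection[OF P vs(2) ws(2) Pv Pw] unfolding is_basis_def by blast
  then show ?thesis
    using that Pv Pw range by blast
qed

lemma trace_idempotent_neq_0: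
  assumes P: "K_linear K P" and idem: "\<And>x. P (P x) = P x" and nz: "P x \<noteq> 0"
    and char_0: "\<And>m::nat. m > 0 \<Longrightarrow> (of_nat m :: 'a) \<noteq> 0"
  shows "trace K bs P \<noteq> 0"
proof -
  obtain vs ws where C: "is_basis K (vs @ ws)" and Pv: "\<forall>v\<in>set vs. P v = v"
    and Pw: "\<forall>w\<in>set ws. P w = 0" and range: "range P \<subseteq> lin_span K vs"
    using idempotent_adapted_basis[of P thesis, OF P idem] by metis
  interpret C: K_basis K "vs @ ws" by unfold_locales (rule C)
  have "trace K bs P = trace K (vs @ ws) P"
    by (rule trace_basis_indep[OF C P])
  also have "\<dots> = (\<Sum>i<length (vs @ ws). if i < length vs then 1 else 0)"
    unfolding trace_def
  proof (rule sum.cong)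
    fix i assume "i \<in> {..<length (vs @ ws)}"
    then have i: "i < length (vs @ ws)" by simp
    show "coord K (vs @ ws) (P ((vs @ ws) ! i)) i = (if i < length vs then 1 else 0)"
    proof (cases "i < length vs")
      case True
      then have "P ((vs @ ws) ! i) = (vs @ ws) ! i" using Pv by (simp add: nth_append)
      then show ?thesis using True C.coord_nth[OF i i] by simp
    next
      case False
      then have "P ((vs @ ws) ! i) = 0" using Pw i by (simp add: nth_append)
      then show ?thesis using False C.coord_zero[OF i] by simp
    qed
  qed simp
  also have "\<dots> = of_nat (length vs)"
    by (rule sum_lessThan_indicator) simp
  moreover have "vs \<noteq> []"
  proof
    assume "vs = []"
    then have "P x = 0" using range by (auto simp: lin_span_def)
    then show False using nz by simp
  qed
  ultimately show ?thesis using char_0 by simp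
qed

end

section \<open>Homogeneous elements of a Yetter-Drinfeld algebra\<close>

lemma central_field_if_central_subfield: "central_subfield sc K \<Longrightarrow> central_field K"
  unfolding central_subfield_def by unfold_locales auto

definition homogeneous :: "('g \<Rightarrow> 'a::zero \<Rightarrow> 'a) \<Rightarrow> 'g \<Rightarrow> 'a \<Rightarrow> bool" where
  "homogeneous cmp d z \<longleftrightarrow> (\<forall>g. cmp g z = (if g = d then z else 0))"

locale YD_algebra_over =
  fixes sc :: "complex \<Rightarrow> 'a::ring_1 \<Rightarrow> 'a"
    and act cmp :: "'g::ab_group_add \<Rightarrow> 'a \<Rightarrow> 'a"
    and K :: "'a set"
  assumes YD: "YD_algebra sc act cmp"
    and central: "central_subfield sc K"
    and invariant: "invariant_set act cmp K"
begin

sublocale central_field K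
  using central by (rule central_field_if_central_subfield)

lemma
  complex_algebra: "complex_algebra sc"
  and act_zero_left: "act 0 x = x"
  and act_add_left: "act (g + h) x = act g (act h x)"
  and additive_act: "additive (act g)"
  and additive_cmp: "additive (cmp g)"
  and finite_gsupp: "finite (gsupp cmp x)"
  and sum_cmp: "(\<Sum>g\<in>gsupp cmp x. cmp g x) = x"
  and cmp_cmp: "cmp g (cmp h x) = (if g = h then cmp g x else 0)"
  and cmp_act: "cmp g (act h x) = act h (cmp g x)"
  and act_mult: "act g (x * y) = act g x * act g y"
  and act_one: "act g 1 = 1"
  and cmp_mult: "cmp k (x * y) = (\<Sum>g\<in>gsupp cmp x. cmp g x * cmp (k - g) y)"
  and cmp_one: "cmp g 1 = (if g = 0 then 1 else 0)"
  using YD unfolding YD_algebra_def additive_def by auto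

lemma act_K: "k \<in> K \<Longrightarrow> act g k = k"
  and cmp_zero_K: "k \<in> K \<Longrightarrow> cmp 0 k = k"
  using invariant unfolding invariant_set_def by auto

lemma cmp_zero [simp]: "cmp g 0 = 0"
  and cmp_add: "cmp g (x + y) = cmp g x + cmp g y"
  and cmp_sum: "cmp g (sum f A) = (\<Sum>a\<in>A. cmp g (f a))"
  using additive_cmp by (simp_all add: additive.zero additive.add additive.sum)

lemma act_zero [simp]: "act g 0 = 0"
  and act_add: "act g (x + y) = act g x + act g y"
  and act_sum: "act g (sum f A) = (\<Sum>a\<in>A. act g (f a))"
  using additive_act by (simp_all add: additive.zero additive.add additive.sum)

lemma sum_gsupp_superset:
  assumes "finite S" "gsupp cmp x \<subseteq> S" "\<And>g. F g 0 = 0"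
  shows "(\<Sum>g\<in>gsupp cmp x. F g (cmp g x)) = (\<Sum>g\<in>S. F g (cmp g x))"
  by (rule sum.mono_neutral_left) (use assms in \<open>auto simp: gsupp_def\<close>)

lemma homogeneousD: "homogeneous cmp d z \<Longrightarrow> cmp g z = (if g = d then z else 0)"
  by (simp add: homogeneous_def)

lemma sum_gsupp_homogeneous:
  assumes h: "homogeneous cmp d z" and F: "\<And>g. F g 0 = 0"
  shows "(\<Sum>g\<in>gsupp cmp z. F g (cmp g z)) = F d z"
proof -
  have "(\<Sum>g\<in>gsupp cmp z. F g (cmp g z)) = (\<Sum>g\<in>{d}. F g (cmp g z))"
    by (rule sum_gsupp_superset) (use h F in \<open>auto simp: homogeneous_def gsupp_def\<close>)
  then show ?thesis using homogeneousD[OF h, of d] by simp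
qed

lemma sum_gsupp_single:
  assumes "\<And>g. g \<noteq> d \<Longrightarrow> F g (cmp g x) = 0" "\<And>g. F g 0 = 0"
  shows "(\<Sum>g\<in>gsupp cmp x. F g (cmp g x)) = F d (cmp d x)"
proof -
  have "(\<Sum>g\<in>gsupp cmp x. F g (cmp g x)) = (\<Sum>g\<in>gsupp cmp x \<union> {d}. F g (cmp g x))"
    by (rule sum_gsupp_superset) (use assms in \<open>auto simp: finite_gsupp\<close>)
  also have "\<dots> = F d (cmp d x) + (\<Sum>g\<in>(gsupp cmp x \<union> {d}) - {d}. F g (cmp g x))"
    by (rule sum.remove) (simp_all add: finite_gsupp)
  also have "(\<Sum>g\<in>(gsupp cmp x \<union> {d}) - {d}. F g (cmp g x)) = 0"
    using assms(1) by (intro sum.neutral) auto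
  finally show ?thesis by simp
qed

lemma homogeneousI:
  assumes "\<And>g. g \<noteq> d \<Longrightarrow> cmp g z = 0"
  shows "homogeneous cmp d z"
proof -
  have "z = cmp d z"
    using sum_gsupp_single[of d "\<lambda>g v. v" z] assms by (simp add: sum_cmp)
  then show ?thesis
    using assms by (simp add: homogeneous_def)
qed

lemma homogeneous_cmp: "homogeneous cmp g (cmp g x)"
  by (rule homogeneousI) (simp add: cmp_cmp)

lemma homogeneous_one: "homogeneous cmp 0 1"
  by (simp add: homogeneous_def cmp_one)

lemma homogeneous_K: "k \<in> K \<Longrightarrow> homogeneous cmp 0 k"
  by (rule homogeneousI) (metis cmp_zero_K cmp_cmp)

lemma homogeneous_sum: "(\<And>a. a \<in> A \<Longrightarrow> homogeneous cmp d (f a)) \<Longrightarrow> homogeneous cmp d (sum f A)"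
  by (induct A rule: infinite_finite_induct) (auto simp: homogeneous_def cmp_add)

lemma cmp_mult_homogeneous_left:
  assumes "homogeneous cmp d x"
  shows "cmp k (x * y) = x * cmp (k - d) y"
  unfolding cmp_mult
  by (rule sum_gsupp_homogeneous[OF assms, where F = "\<lambda>g v. v * cmp (k - g) y"]) simp

lemma homogeneous_mult:
  "homogeneous cmp d x \<Longrightarrow> homogeneous cmp e y \<Longrightarrow> homogeneous cmp (d + e) (x * y)"
  by (rule homogeneousI) (auto simp: cmp_mult_homogeneous_left homogeneousD algebra_simps)

lemma homogeneous_act: "homogeneous cmp d x \<Longrightarrow> homogeneous cmp d (act g x)"
  by (simp add: homogeneous_def cmp_act)

lemma cmp_zero_mult_homogeneous_right:
  assumes h: "homogeneous cmp d b"
  shows "cmp 0 (u * b) = cmp (- d) u * b"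
proof -
  have "cmp 0 (u * b) = (\<Sum>g\<in>gsupp cmp u. cmp g u * cmp (0 - g) b)"
    by (rule cmp_mult)
  also have "\<dots> = cmp (- d) u * cmp (0 - - d) b"
    by (rule sum_gsupp_single[where F = "\<lambda>g v. v * cmp (0 - g) b"])
      (auto simp: homogeneousD[OF h] minus_equation_iff)
  finally show ?thesis by (simp add: homogeneousD[OF h])
qed

lemma cmp_K_mult: "k \<in> K \<Longrightarrow> cmp g (k * x) = k * cmp g x"
  by (simp add: cmp_mult_homogeneous_left[OF homogeneous_K])

lemma act_K_mult: "k \<in> K \<Longrightarrow> act g (k * x) = k * act g x"
  by (simp add: act_mult act_K)

lemma sum_gsupp_add:
  fixes F :: "'g \<Rightarrow> 'a \<Rightarrow> 'm::ab_group_add"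
  assumes F: "\<And>g. additive (F g)"
  shows "(\<Sum>g\<in>gsupp cmp (x + y). F g (cmp g (x + y))) =
         (\<Sum>g\<in>gsupp cmp x. F g (cmp g x)) + (\<Sum>g\<in>gsupp cmp y. F g (cmp g y))"
proof -
  let ?S = "gsupp cmp x \<union> gsupp cmp y \<union> gsupp cmp (x + y)"
  have F0: "F g 0 = 0" for g using F by (rule additive.zero)
  have S: "finite ?S" by (simp add: finite_gsupp)
  have "(\<Sum>g\<in>gsupp cmp (x + y). F g (cmp g (x + y))) = (\<Sum>g\<in>?S. F g (cmp g (x + y)))"
    by (rule sum_gsupp_superset[where F = F, OF S _ F0]) auto
  also have "\<dots> = (\<Sum>g\<in>?S. F g (cmp g x)) + (\<Sum>g\<in>?S. F g (cmp g y))"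
    by (simp add: cmp_add additive.add[OF F] sum.distrib)
  also have "(\<Sum>g\<in>?S. F g (cmp g x)) = (\<Sum>g\<in>gsupp cmp x. F g (cmp g x))"
    by (rule sum_gsupp_superset[where F = F, OF S _ F0, symmetric]) auto
  also have "(\<Sum>g\<in>?S. F g (cmp g y)) = (\<Sum>g\<in>gsupp cmp y. F g (cmp g y))"
    by (rule sum_gsupp_superset[where F = F, OF S _ F0, symmetric]) auto
  finally show ?thesis .
qed

lemma sum_gsupp_sum_homogeneous:
  fixes F :: "'g \<Rightarrow> 'a \<Rightarrow> 'm::ab_group_add"
  assumes F: "\<And>g. additive (F g)" and h: "\<And>j. j \<in> J \<Longrightarrow> homogeneous cmp (\<delta> j) (Y j)"
  shows "(\<Sum>g\<in>gsupp cmp (sum Y J). F g (cmp g (sum Y J))) = (\<Sum>j\<in>J. F (\<delta> j) (Y j))"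
proof -
  have "additive (\<lambda>x. \<Sum>g\<in>gsupp cmp x. F g (cmp g x))"
    by unfold_locales (rule sum_gsupp_add[OF F])
  then have "(\<Sum>g\<in>gsupp cmp (sum Y J). F g (cmp g (sum Y J))) =
      (\<Sum>j\<in>J. \<Sum>g\<in>gsupp cmp (Y j). F g (cmp g (Y j)))"
    by (rule additive.sum)
  also have "\<dots> = (\<Sum>j\<in>J. F (\<delta> j) (Y j))"
    using h F by (intro sum.cong refl sum_gsupp_homogeneous) (auto intro: additive.zero)
  finally show ?thesis .
qed

lemma exists_homogeneous_basis:
  assumes "finite_dim_over K"
  obtains bs where "is_basis K bs" "\<forall>i<length bs. \<exists>d. homogeneous cmp d (bs ! i)"
proof -
  obtain S where S: "finite S" "\<forall>a. \<exists>c. (\<forall>s\<in>S. c s \<in> K) \<and> a = (\<Sum>s\<in>S. c s * s)"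
    using assms unfolding finite_dim_over_def by blast
  define H where "H = (\<Union>s\<in>S. (\<lambda>g. cmp g s) ` gsupp cmp s)"
  have "finite H" unfolding H_def using S(1) finite_gsupp by auto
  then obtain us where us: "set us = H" using finite_list by blast
  have span: "a \<in> lin_span K us" for a
  proof -
    obtain c where c: "\<forall>s\<in>S. c s \<in> K" "a = (\<Sum>s\<in>S. c s * s)" using S(2) by blast
    then have "a = (\<Sum>s\<in>S. c s * (\<Sum>g\<in>gsupp cmp s. cmp g s))"
      by (simp add: sum_cmp)
    also have "\<dots> = (\<Sum>s\<in>S. \<Sum>g\<in>gsupp cmp s. c s * cmp g s)"
      by (simp add: sum_distrib_left)
    also have "\<dots> \<in> lin_span K us"
      using c(1) us unfolding H_def by (intro lin_span_sum lin_span_mult mem_lin_span) auto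
    finally show ?thesis .
  qed
  obtain bs where bs: "set bs \<subseteq> set us" "lin_indep K bs" "lin_span K bs = lin_span K us"
    using exists_basis_sublist by blast
  have "\<exists>d. homogeneous cmp d (bs ! i)" if "i < length bs" for i
  proof -
    have "bs ! i \<in> H" using that bs(1) us by (metis nth_mem subsetD)
    then obtain s g where "bs ! i = cmp g s" unfolding H_def by blast
    then show ?thesis using homogeneous_cmp by metis
  qed
  then show thesis
    using that[of bs] bs span unfolding is_basis_def by blast
qed

end

section \<open>The trace form and a separability idempotent\<close>

lemma complex_algebra_of_nat_neq_0:
  fixes sc :: "complex \<Rightarrow> 'a::ring_1 \<Rightarrow> 'a"
  assumes "complex_algebra sc" and "m > 0"
  shows "(of_nat m :: 'a) \<noteq> 0"
proof -
  interpret V: vector_space sc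
    using assms(1) by (simp add: complex_algebra_def)
  have "sc (of_nat n) 1 = (of_nat n :: 'a)" for n
    by (induct n) (simp_all add: V.scale_left_distrib)
  moreover have "sc (of_nat m) (1::'a) \<noteq> 0"
    using assms(2) by simp
  ultimately show ?thesis by simp
qed

lemma left_ideal_diff: "left_ideal L \<Longrightarrow> x \<in> L \<Longrightarrow> y \<in> L \<Longrightarrow> x - y \<in> L"
  unfolding left_ideal_def diff_conv_add_uminus by blast

lemma left_ideal_mult: "left_ideal L \<Longrightarrow> x \<in> L \<Longrightarrow> a * x \<in> L"
  unfolding left_ideal_def by blast

lemma semisimple_left_ideal_idempotent:
  fixes L :: "'a::ring_1 set"
  assumes "semisimple_ring TYPE('a::ring_1)" and L: "left_ideal L" and "x \<in> L" "x \<noteq> 0"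
  obtains e where "e \<in> L" "e \<noteq> 0" "e * e = e"
proof -
  obtain L' where L': "left_ideal L'" "L \<inter> L' = {0}" "\<forall>x. \<exists>y\<in>L. \<exists>z\<in>L'. x = y + z"
    using assms(1)[unfolded semisimple_ring_def, rule_format, OF L] by blast
  obtain e f where ef: "e \<in> L" "f \<in> L'" "1 = e + f"
    using L'(3) by blast
  have right_unit: "y * e = y" if "y \<in> L" for y
  proof -
    have "f = 1 - e"
      using ef(3) by (metis add_diff_cancel_left')
    then have "y - y * e = y * f"
      by (simp add: right_diff_distrib)
    moreover have "y * f \<in> L'" "y - y * e \<in> L"
      using that ef L L'(1) by (simp_all add: left_ideal_mult left_ideal_diff)
    ultimately have "y - y * e \<in> L \<inter> L'"
      by simp
    then show ?thesis
      using L'(2) by simp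
  qed
  have "e \<noteq> 0"
    using right_unit[OF assms(3)] assms(4) by auto
  then show thesis
    using that ef(1) right_unit[OF ef(1)] by blast
qed

locale semisimple_YD_basis = YD_algebra_over sc act cmp K + K_basis K bs
  for sc :: "complex \<Rightarrow> 'a::ring_1 \<Rightarrow> 'a" and act cmp :: "'g::ab_group_add \<Rightarrow> 'a \<Rightarrow> 'a"
    and K :: "'a set" and bs :: "'a list" +
  assumes semisimple: "semisimple_ring TYPE('a)"
    and homogeneous_basis: "\<forall>i<length bs. \<exists>d. homogeneous cmp d (bs ! i)"
begin

lemma of_nat_neq_0: "m > 0 \<Longrightarrow> (of_nat m :: 'a) \<noteq> 0"
  by (rule complex_algebra_of_nat_neq_0[OF complex_algebra])

definition basis_degree :: "nat \<Rightarrow> 'g" where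
  "basis_degree i = (SOME d. homogeneous cmp d (bs ! i))"

definition trace_form :: "'a \<Rightarrow> 'a" where
  "trace_form z = trace K bs (\<lambda>w. z * w)"

lemma homogeneous_nth: "i < length bs \<Longrightarrow> homogeneous cmp (basis_degree i) (bs ! i)"
  unfolding basis_degree_def using homogeneous_basis by (metis someI_ex)

lemma additive_trace_form: "additive trace_form"
  by unfold_locales (simp add: trace_form_def distrib_right trace_add)

lemma trace_form_zero [simp]: "trace_form 0 = 0"
  and trace_form_add: "trace_form (x + y) = trace_form x + trace_form y"
  and trace_form_sum: "trace_form (sum f A) = (\<Sum>a\<in>A. trace_form (f a))"
  using additive_trace_form by (simp_all add: additive.zero additive.add additive.sum)

lemma trace_form_K_mult: "k \<in> K \<Longrightarrow> trace_form (k * z) = k * trace_form z"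
  unfolding trace_form_def mult.assoc by (rule trace_mult)

lemma trace_form_mem: "trace_form z \<in> K"
  unfolding trace_form_def by (rule trace_mem)

lemma trace_form_commute: "trace_form (x * y) = trace_form (y * x)"
  unfolding trace_form_def mult.assoc
  by (rule trace_comp_commute[OF K_linear_mult_left K_linear_mult_left])

lemma trace_form_nondegenerate:
  assumes "\<And>y. trace_form (x * y) = 0"
  shows "x = 0"
proof (rule ccontr)
  assume "x \<noteq> 0"
  define L where "L = {x. \<forall>y. trace_form (x * y) = 0}"
  have "u + v \<in> L" "- u \<in> L" "a * u \<in> L" if "u \<in> L" "v \<in> L" for a u v
  proof -
    have "trace_form (a * u * y) = trace_form (u * (y * a))" for y
      using trace_form_commute[of a "u * y"] by (simp add: mult.assoc)
    then show "u + v \<in> L" "- u \<in> L" "a * u \<in> L"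
      using that additive.minus[OF additive_trace_form]
      by (simp_all add: L_def distrib_right trace_form_add)
  qed
  then have "left_ideal L"
    unfolding left_ideal_def by (simp add: L_def)
  moreover have "x \<in> L"
    using assms by (simp add: L_def)
  ultimately obtain e where e: "e \<in> L" "e \<noteq> 0" "e * e = e"
    using semisimple_left_ideal_idempotent[OF semisimple _ _ \<open>x \<noteq> 0\<close>] by metis
  have "trace K bs (\<lambda>w. e * w) \<noteq> 0"
  proof (rule trace_idempotent_neq_0[OF K_linear_mult_left])
    show "e * (e * w) = e * w" for w
      using e(3) by (simp add: mult.assoc[symmetric])
    show "e * 1 \<noteq> 0"
      using e(2) by simp
  qed (rule of_nat_neq_0)
  moreover have "trace_form (e * 1) = 0"
    using e(1) unfolding L_def by blast
  ultimately show False
    by (simp add: trace_form_def)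
qed

lemma coord_homogeneous:
  assumes h: "homogeneous cmp g x" and i: "i < length bs" and "basis_degree i \<noteq> g"
  shows "coord K bs x i = 0"
proof -
  define c where "c j = (if basis_degree j = g then coord K bs x j else 0)" for j
  have "x = cmp g x"
    using homogeneousD[OF h, of g] by simp
  also have "\<dots> = (\<Sum>j<length bs. coord K bs x j * cmp g (bs ! j))"
    by (subst sum_coord[symmetric]) (simp add: cmp_sum cmp_K_mult coord_mem)
  also have "\<dots> = lincomb c bs"
    unfolding lincomb_def c_def by (rule sum.cong) (simp_all add: homogeneousD[OF homogeneous_nth] eq_commute)
  finally have "x = lincomb c bs" .
  moreover have "\<forall>j<length bs. c j \<in> K"
    by (simp add: c_def coord_mem K_zero)
  ultimately have "coord K bs x i = c i"
    using coord_eqI i by blast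
  then show ?thesis using assms(3) by (simp add: c_def)
qed

lemma trace_form_homogeneous:
  assumes h: "homogeneous cmp g y" and "g \<noteq> 0"
  shows "trace_form y = 0"
  unfolding trace_form_def trace_def
proof (rule sum.neutral, intro ballI)
  fix i assume "i \<in> {..<length bs}"
  then have i: "i < length bs" by simp
  show "coord K bs (y * bs ! i) i = 0"
    by (rule coord_homogeneous[OF homogeneous_mult[OF h homogeneous_nth[OF i]] i]) (use assms in simp)
qed

lemma trace_form_cmp_zero: "trace_form x = trace_form (cmp 0 x)"
proof -
  have "trace_form x = (\<Sum>g\<in>gsupp cmp x. trace_form (cmp g x))"
    by (subst sum_cmp[symmetric]) (rule trace_form_sum)
  also have "\<dots> = trace_form (cmp 0 x)"
    by (rule sum_gsupp_single) (simp_all add: trace_form_homogeneous[OF homogeneous_cmp])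
  finally show ?thesis .
qed

definition dual_map :: "'a \<Rightarrow> 'a" where
  "dual_map x = (\<Sum>j<length bs. trace_form (x * bs ! j) * bs ! j)"

lemma K_linear_dual_map: "K_linear K dual_map"
  unfolding K_linear_def additive_def dual_map_def
  by (simp add: distrib_right trace_form_add sum.distrib mult.assoc trace_form_K_mult sum_distrib_left)

lemma coord_dual_map: "i < length bs \<Longrightarrow> coord K bs (dual_map x) i = trace_form (x * bs ! i)"
  by (rule coord_eqI) (simp_all add: trace_form_mem dual_map_def lincomb_def)

lemma dual_map_eq_0_imp: "dual_map x = 0 \<Longrightarrow> x = 0"
proof (rule trace_form_nondegenerate)
  fix y assume "dual_map x = 0"
  then have "trace_form (x * bs ! j) = 0" if "j < length bs" for j
    using coord_dual_map[OF that, of x] coord_zero[OF that] by simp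
  then have "trace_form (x * (coord K bs y j * bs ! j)) = 0" if "j < length bs" for j
    using that by (simp add: K_left_commute[OF coord_mem[OF that]] trace_form_K_mult[OF coord_mem[OF that]])
  then have "trace_form (x * (\<Sum>j<length bs. coord K bs y j * bs ! j)) = 0"
    by (simp add: sum_distrib_left trace_form_sum)
  then show "trace_form (x * y) = 0" by (simp add: sum_coord)
qed

lemma exists_dual_basis_element:
  assumes i: "i < length bs"
  shows "\<exists>v. homogeneous cmp (- basis_degree i) v \<and>
    (\<forall>j<length bs. trace_form (v * bs ! j) = (if i = j then 1 else 0))"
proof -
  obtain u where u: "dual_map u = bs ! i"
    using K_linear_inj_imp_surj[OF basis K_linear_dual_map dual_map_eq_0_imp] by (metis surjD)
  have tu: "trace_form (u * bs ! j) = (if i = j then 1 else 0)" if j: "j < length bs" for j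
    using coord_dual_map[OF j, of u] coord_nth[OF j i] by (simp add: u eq_commute)
  define v where "v = cmp (- basis_degree i) u"
  have "trace_form (v * bs ! j) = (if i = j then 1 else 0)" if j: "j < length bs" for j
  proof -
    have shift: "trace_form (w * bs ! j) = trace_form (cmp (- basis_degree j) w * bs ! j)" for w
      by (simp add: trace_form_cmp_zero[of "w * bs ! j"] cmp_zero_mult_homogeneous_right[OF homogeneous_nth[OF j]])
    show ?thesis
    proof (cases "basis_degree j = basis_degree i")
      case True
      then have "trace_form (v * bs ! j) = trace_form (u * bs ! j)"
        using shift[of v] shift[of u] by (simp add: v_def cmp_cmp)
      then show ?thesis using tu[OF j] by simp
    next
      case False
      then have "trace_form (v * bs ! j) = 0"
        using shift[of v] by (simp add: v_def cmp_cmp)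
      moreover have "i \<noteq> j" using False by auto
      ultimately show ?thesis by simp
    qed
  qed
  moreover have "homogeneous cmp (- basis_degree i) v"
    unfolding v_def by (rule homogeneous_cmp)
  ultimately show ?thesis by blast
qed

definition dual_basis :: "nat \<Rightarrow> 'a" where
  "dual_basis i = (SOME v. homogeneous cmp (- basis_degree i) v \<and>
     (\<forall>j<length bs. trace_form (v * bs ! j) = (if i = j then 1 else 0)))"

lemma
  assumes "i < length bs"
  shows homogeneous_dual_basis: "homogeneous cmp (- basis_degree i) (dual_basis i)"
    and trace_form_dual_basis:
      "\<And>j. j < length bs \<Longrightarrow> trace_form (dual_basis i * bs ! j) = (if i = j then 1 else 0)"
  using someI_ex[OF exists_dual_basis_element[OF assms]] unfolding dual_basis_def by blast+

lemma coord_eq_trace_form: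
  assumes i: "i < length bs"
  shows "coord K bs y i = trace_form (dual_basis i * y)"
proof -
  have "trace_form (dual_basis i * y) =
      (\<Sum>j<length bs. coord K bs y j * trace_form (dual_basis i * bs ! j))"
    by (subst sum_coord[symmetric, of y])
      (simp add: sum_distrib_left trace_form_sum K_left_commute coord_mem trace_form_K_mult)
  also have "\<dots> = coord K bs y i"
    using i by (simp add: trace_form_dual_basis if_distrib[of "(*) _"] cong: if_cong)
  finally show ?thesis by simp
qed

lemma dual_basis_expansion: "(\<Sum>i<length bs. trace_form (y * bs ! i) * dual_basis i) = y"
proof -
  let ?z = "\<Sum>i<length bs. trace_form (y * bs ! i) * dual_basis i"
  have dual_map_dual_basis: "dual_map (dual_basis i) = bs ! i" if i: "i < length bs" for i
  proof -
    have "dual_map (dual_basis i) = (\<Sum>j<length bs. if i = j then bs ! j else 0)"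
      unfolding dual_map_def by (rule sum.cong) (simp_all add: trace_form_dual_basis[OF i])
    then show ?thesis using i by simp
  qed
  have "dual_map ?z = (\<Sum>i<length bs. dual_map (trace_form (y * bs ! i) * dual_basis i))"
    by (rule additive.sum[OF K_linear_additive[OF K_linear_dual_map]])
  also have "\<dots> = (\<Sum>i<length bs. trace_form (y * bs ! i) * bs ! i)"
    by (rule sum.cong)
      (simp_all add: K_linear_K_mult[OF K_linear_dual_map] trace_form_mem dual_map_dual_basis)
  also have "\<dots> = dual_map y"
    by (simp add: dual_map_def)
  finally have "dual_map (?z - y) = 0"
    by (simp add: additive.diff[OF K_linear_additive[OF K_linear_dual_map]])
  then show ?thesis
    using dual_map_eq_0_imp by fastforce
qed

text \<open>
  A K-balanced biadditive \<open>\<Phi>\<close> stands for a map out of \<open>A \<otimes>\<^sub>K A\<close>, so the following says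
  \<open>\<Sum> x b\<^sup>i \<otimes> b\<^sub>i = \<Sum> b\<^sup>i \<otimes> b\<^sub>i x\<close>.
\<close>

lemma sum_balanced_dual_basis:
  fixes \<Phi> :: "'a \<Rightarrow> 'a \<Rightarrow> 'm::ab_group_add"
  assumes add_left: "\<And>b. additive (\<lambda>a. \<Phi> a b)" and add_right: "\<And>a. additive (\<Phi> a)"
    and balanced: "\<And>k a b. k \<in> K \<Longrightarrow> \<Phi> (k * a) b = \<Phi> a (k * b)"
  shows "(\<Sum>i<length bs. \<Phi> (x * dual_basis i) (bs ! i)) = (\<Sum>i<length bs. \<Phi> (dual_basis i) (bs ! i * x))"
proof -
  let ?n = "length bs"
  have "(\<Sum>i<?n. \<Phi> (dual_basis i) (bs ! i * x)) =
      (\<Sum>i<?n. \<Sum>j<?n. \<Phi> (dual_basis i) (coord K bs (bs ! i * x) j * bs ! j))"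
    by (simp add: additive.sum[OF add_right, symmetric] sum_coord)
  also have "\<dots> = (\<Sum>i<?n. \<Sum>j<?n. \<Phi> (coord K bs (bs ! i * x) j * dual_basis i) (bs ! j))"
    by (intro sum.cong refl) (simp add: balanced coord_mem)
  also have "\<dots> = (\<Sum>j<?n. \<Phi> (\<Sum>i<?n. coord K bs (bs ! i * x) j * dual_basis i) (bs ! j))"
    by (subst sum.swap) (simp add: additive.sum[OF add_left])
  also have "\<dots> = (\<Sum>j<?n. \<Phi> (x * dual_basis j) (bs ! j))"
  proof (rule sum.cong[OF refl])
    fix j assume "j \<in> {..<?n}"
    then have "coord K bs (bs ! i * x) j = trace_form (x * dual_basis j * bs ! i)" for i
      using trace_form_commute[of "dual_basis j * bs ! i" x]
      by (simp add: coord_eq_trace_form mult.assoc)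
    then show "\<Phi> (\<Sum>i<?n. coord K bs (bs ! i * x) j * dual_basis i) (bs ! j) = \<Phi> (x * dual_basis j) (bs ! j)"
      by (simp add: dual_basis_expansion)
  qed
  finally show ?thesis ..
qed

definition casimir :: 'a where
  "casimir = (\<Sum>i<length bs. dual_basis i * bs ! i)"

lemma casimir_central: "x * casimir = casimir * x"
proof -
  have "(\<Sum>i<length bs. x * dual_basis i * bs ! i) = (\<Sum>i<length bs. dual_basis i * (bs ! i * x))"
    by (rule sum_balanced_dual_basis)
      (simp_all add: additive_def distrib_left distrib_right K_left_commute mult.assoc)
  then show ?thesis
    unfolding casimir_def by (simp add: sum_distrib_left sum_distrib_right mult.assoc)
qed

lemma homogeneous_casimir: "homogeneous cmp 0 casimir"
  unfolding casimir_def
proof (rule homogeneous_sum)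
  fix i assume "i \<in> {..<length bs}"
  then show "homogeneous cmp 0 (dual_basis i * bs ! i)"
    using homogeneous_mult[OF homogeneous_dual_basis homogeneous_nth, of i i] by simp
qed

lemma trace_form_casimir_mult: "trace_form (casimir * z) = trace K bs (\<lambda>w. w * z)"
  unfolding casimir_def trace_def
  by (simp add: sum_distrib_right trace_form_sum mult.assoc coord_eq_trace_form)

lemma casimir_mult_eq_0_imp:
  assumes "casimir * y = 0"
  shows "y = 0"
proof (rule ccontr)
  assume "y \<noteq> 0"
  define L where "L = {y. casimir * y = 0}"
  have "left_ideal L"
    unfolding left_ideal_def L_def
    by (auto simp: distrib_left) (metis casimir_central mult.assoc mult_zero_right)
  then obtain e where e: "e \<in> L" "e \<noteq> 0" "e * e = e"
    using semisimple_left_ideal_idempotent[OF semisimple _ _ \<open>y \<noteq> 0\<close>] assms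
    unfolding L_def by blast
  have "trace K bs (\<lambda>w. w * e) \<noteq> 0"
  proof (rule trace_idempotent_neq_0[OF K_linear_mult_right])
    show "w * e * e = w * e" for w
      using e(3) by (simp add: mult.assoc)
    show "1 * e \<noteq> 0"
      using e(2) by simp
  qed (rule of_nat_neq_0)
  then show False
    using e(1) trace_form_casimir_mult[of e] by (simp add: L_def)
qed

definition casimir_inverse :: 'a where
  "casimir_inverse = (SOME w. casimir * w = 1)"

lemma casimir_mult_inverse: "casimir * casimir_inverse = 1"
proof -
  have "surj (\<lambda>y. casimir * y)"
    by (rule K_linear_inj_imp_surj[OF basis K_linear_mult_left casimir_mult_eq_0_imp])
  then have "\<exists>w. casimir * w = 1"
    by (metis surjD)
  then show ?thesis
    unfolding casimir_inverse_def by (rule someI_ex)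
qed

lemma casimir_inverse_central: "x * casimir_inverse = casimir_inverse * x"
proof -
  have "x * casimir_inverse = casimir_inverse * casimir * x * casimir_inverse"
    using casimir_mult_inverse casimir_central by simp
  also have "\<dots> = casimir_inverse * x * (casimir * casimir_inverse)"
    by (metis casimir_central mult.assoc)
  finally show ?thesis
    by (simp add: casimir_mult_inverse)
qed

lemma homogeneous_casimir_inverse: "homogeneous cmp 0 casimir_inverse"
proof (rule homogeneousI)
  fix g :: 'g assume "g \<noteq> 0"
  have "casimir * cmp g casimir_inverse = cmp g (casimir * casimir_inverse)"
    by (simp add: cmp_mult_homogeneous_left[OF homogeneous_casimir])
  also have "\<dots> = 0"
    using \<open>g \<noteq> 0\<close> by (simp add: casimir_mult_inverse cmp_one)
  finally show "cmp g casimir_inverse = 0"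
    by (rule casimir_mult_eq_0_imp)
qed

definition sep_coeff :: "nat \<Rightarrow> 'a" where
  "sep_coeff i = casimir_inverse * dual_basis i"

lemma homogeneous_sep_coeff: "i < length bs \<Longrightarrow> homogeneous cmp (- basis_degree i) (sep_coeff i)"
  unfolding sep_coeff_def using homogeneous_mult[OF homogeneous_casimir_inverse homogeneous_dual_basis]
  by simp

lemma sum_sep_coeff: "(\<Sum>i<length bs. sep_coeff i * bs ! i) = 1"
  using casimir_mult_inverse casimir_central[of casimir_inverse]
  by (simp add: sep_coeff_def casimir_def mult.assoc sum_distrib_left[symmetric])

lemma sum_balanced_sep_coeff:
  fixes \<Phi> :: "'a \<Rightarrow> 'a \<Rightarrow> 'm::ab_group_add"
  assumes add_left: "\<And>b. additive (\<lambda>a. \<Phi> a b)" and add_right: "\<And>a. additive (\<Phi> a)"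
    and balanced: "\<And>k a b. k \<in> K \<Longrightarrow> \<Phi> (k * a) b = \<Phi> a (k * b)"
  shows "(\<Sum>i<length bs. \<Phi> (x * sep_coeff i) (bs ! i)) = (\<Sum>i<length bs. \<Phi> (sep_coeff i) (bs ! i * x))"
proof -
  have "(\<Sum>i<length bs. \<Phi> (casimir_inverse * (x * dual_basis i)) (bs ! i)) =
      (\<Sum>i<length bs. \<Phi> (casimir_inverse * dual_basis i) (bs ! i * x))"
    by (rule sum_balanced_dual_basis[where \<Phi> = "\<lambda>a. \<Phi> (casimir_inverse * a)"])
      (use add_left add_right balanced in \<open>simp_all add: additive_def distrib_left K_left_commute\<close>)
  then show ?thesis
    unfolding sep_coeff_def by (simp add: mult.assoc[symmetric] casimir_inverse_central)
qed

end

section \<open>Right modules over the braided enveloping algebra\<close>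

definition rmod_invariant :: "('m::ab_group_add \<Rightarrow> 'a::ring_1 \<Rightarrow> 'a \<Rightarrow> 'm) \<Rightarrow> 'm \<Rightarrow> bool" where
  "rmod_invariant rho z \<longleftrightarrow> (\<forall>x. rho z x 1 = rho z 1 x)"

context YD_algebra_over
begin

lemma bop_one_right: "bop act cmp a 1 = a"
  unfolding bop_def by (simp add: act_one sum_cmp)

lemma bop_homogeneous:
  assumes "homogeneous cmp d z"
  shows "bop act cmp z y = act d y * z"
  unfolding bop_def by (rule sum_gsupp_homogeneous[OF assms]) simp

lemma bop_one_left: "bop act cmp 1 y = y"
  using bop_homogeneous[OF homogeneous_one] by (simp add: act_zero_left)

lemma bop_K: "k \<in> K \<Longrightarrow> bop act cmp a k = k * a"
  unfolding bop_def by (simp add: act_K sum_distrib_left[symmetric] sum_cmp)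

context
  fixes rho :: "'m::ab_group_add \<Rightarrow> 'a \<Rightarrow> 'a \<Rightarrow> 'm"
  assumes rmod: "is_rmod act cmp K rho"
begin

lemma additive_rho_module: "additive (\<lambda>n. rho n a b)"
  and additive_rho_left: "additive (\<lambda>a. rho n a b)"
  and additive_rho_right: "additive (rho n a)"
  and rho_bop_K: "k \<in> K \<Longrightarrow> rho n (bop act cmp a k) b = rho n a (k * b)"
  and rho_one_one: "rho n 1 1 = n"
  and rho_rho: "rho (rho n a b) a' b' = (\<Sum>g\<in>gsupp cmp b. rho n (bop act cmp a (act g a')) (cmp g b * b'))"
  using rmod unfolding is_rmod_def additive_def by auto

lemma rho_K_balanced: "k \<in> K \<Longrightarrow> rho n (k * a) b = rho n a (k * b)"
  using rho_bop_K bop_K by metis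

lemma rho_rho_one_left: "rho (rho n a b) 1 x = rho n a (b * x)"
proof -
  have "rho (rho n a b) 1 x = (\<Sum>g\<in>gsupp cmp b. rho n a (cmp g b * x))"
    by (simp add: rho_rho act_one bop_one_right)
  also have "\<dots> = rho n a (b * x)"
    by (simp add: additive.sum[OF additive_rho_right, symmetric] sum_distrib_right[symmetric] sum_cmp)
  finally show ?thesis .
qed

lemma rho_rho_homogeneous:
  assumes "homogeneous cmp d b"
  shows "rho (rho n a b) x 1 = rho n (bop act cmp a (act d x)) b"
proof -
  have "rho (rho n a b) x 1 = (\<Sum>g\<in>gsupp cmp b. rho n (bop act cmp a (act g x)) (cmp g b * 1))"
    by (rule rho_rho)
  also have "\<dots> = rho n (bop act cmp a (act d x)) (b * 1)"
    by (rule sum_gsupp_homogeneous[OF assms, where F = "\<lambda>g v. rho n (bop act cmp a (act g x)) (v * 1)"])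
      (simp add: additive.zero[OF additive_rho_right])
  finally show ?thesis by simp
qed

lemma rmod_invariant_rho:
  assumes "rmod_invariant rho z"
  shows "rho z x y = rho z 1 (x * y)"
proof -
  have "rho z x y = rho (rho z x 1) 1 y"
    by (simp add: rho_rho_one_left)
  also have "\<dots> = rho (rho z 1 x) 1 y"
    using assms by (simp add: rmod_invariant_def)
  also have "\<dots> = rho z 1 (x * y)"
    by (simp add: rho_rho_one_left)
  finally show ?thesis .
qed

lemma rhom_rmod_invariant:
  assumes "rmod_invariant rho z"
  shows "rhom (reg_action act cmp) rho (\<lambda>m. rho z 1 m)"
  unfolding rhom_def
proof (intro conjI allI)
  show "rho z 1 (x + y) = rho z 1 x + rho z 1 y" for x y
    by (rule additive.add[OF additive_rho_right])
  fix m a b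
  have "rho (rho z 1 m) a b = (\<Sum>g\<in>gsupp cmp m. rho z (act g a) (cmp g m * b))"
    by (simp add: rho_rho bop_one_left)
  also have "\<dots> = (\<Sum>g\<in>gsupp cmp m. rho z 1 (act g a * cmp g m * b))"
    by (intro sum.cong refl) (simp add: rmod_invariant_rho[OF assms, of "act _ a"] mult.assoc)
  also have "\<dots> = rho z 1 (reg_action act cmp m a b)"
    unfolding reg_action_def by (rule additive.sum[OF additive_rho_right, symmetric])
  finally show "rho z 1 (reg_action act cmp m a b) = rho (rho z 1 m) a b" ..
qed

end

lemma reg_action_one_left: "reg_action act cmp 1 x y = x * y"
proof -
  have "reg_action act cmp 1 x y = act 0 x * 1 * y"
    unfolding reg_action_def
    by (rule sum_gsupp_homogeneous[OF homogeneous_one, where F = "\<lambda>g v. act g x * v * y"]) simp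
  then show ?thesis
    by (simp add: act_zero_left)
qed

lemma rhom_reg_action_mult:
  assumes "rhom (reg_action act cmp) rho f"
  shows "f (x * y) = rho (f 1) x y"
proof -
  have "f (reg_action act cmp 1 x y) = rho (f 1) x y"
    using assms by (simp add: rhom_def)
  then show ?thesis
    by (simp add: reg_action_one_left)
qed

lemma rmod_invariant_rhom_one:
  assumes "rhom (reg_action act cmp) rho f"
  shows "rmod_invariant rho (f 1)"
  unfolding rmod_invariant_def
proof
  fix x
  have "rho (f 1) x 1 = f x"
    using rhom_reg_action_mult[OF assms, of x 1] by simp
  also have "\<dots> = rho (f 1) 1 x"
    using rhom_reg_action_mult[OF assms, of 1 x] by simp
  finally show "rho (f 1) x 1 = rho (f 1) 1 x" .
qed

lemma reg_action_homogeneous_expansion: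
  "reg_action act cmp m a b =
     (\<Sum>(g, h, l)\<in>gsupp cmp m \<times> gsupp cmp a \<times> gsupp cmp b. act g (cmp h a) * cmp g m * cmp l b)"
proof -
  have "reg_action act cmp m a b =
      (\<Sum>g\<in>gsupp cmp m. act g (\<Sum>h\<in>gsupp cmp a. cmp h a) * cmp g m * (\<Sum>l\<in>gsupp cmp b. cmp l b))"
    by (simp add: reg_action_def sum_cmp)
  also have "\<dots> = (\<Sum>g\<in>gsupp cmp m. \<Sum>l\<in>gsupp cmp b. \<Sum>h\<in>gsupp cmp a. act g (cmp h a) * cmp g m * cmp l b)"
    by (simp add: act_sum sum_distrib_left sum_distrib_right)
  also have "\<dots> = (\<Sum>g\<in>gsupp cmp m. \<Sum>h\<in>gsupp cmp a. \<Sum>l\<in>gsupp cmp b. act g (cmp h a) * cmp g m * cmp l b)"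
    by (intro sum.cong refl sum.swap)
  finally show ?thesis
    by (simp add: sum.cartesian_product)
qed

lemma reg_action_reg_action:
  "reg_action act cmp (reg_action act cmp m a b) a' b' =
     (\<Sum>l\<in>gsupp cmp b. reg_action act cmp m (bop act cmp a (act l a')) (cmp l b * b'))"
proof -
  let ?J = "gsupp cmp m \<times> gsupp cmp a \<times> gsupp cmp b"
  define Y where "Y = (\<lambda>(g, h, l). act g (cmp h a) * cmp g m * cmp l b)"
  define \<delta> where "\<delta> = (\<lambda>(g::'g, h::'g, l::'g). h + g + l)"
  have "homogeneous cmp (\<delta> j) (Y j)" for j
    unfolding Y_def \<delta>_def by (cases j) (auto intro!: homogeneous_mult homogeneous_act homogeneous_cmp)
  then have "reg_action act cmp (sum Y ?J) a' b' = (\<Sum>j\<in>?J. act (\<delta> j) a' * Y j * b')"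
    unfolding reg_action_def
    by (intro sum_gsupp_sum_homogeneous[where F = "\<lambda>g v. act g a' * v * b'"])
      (simp_all add: additive_def distrib_left distrib_right)
  also have "\<dots> = (\<Sum>g\<in>gsupp cmp m. \<Sum>h\<in>gsupp cmp a. \<Sum>l\<in>gsupp cmp b.
      act (h + g + l) a' * (act g (cmp h a) * cmp g m * cmp l b) * b')"
    unfolding sum.cartesian_product Y_def \<delta>_def by (simp add: case_prod_unfold)
  also have "\<dots> = (\<Sum>g\<in>gsupp cmp m. \<Sum>l\<in>gsupp cmp b. \<Sum>h\<in>gsupp cmp a.
      act (h + g + l) a' * (act g (cmp h a) * cmp g m * cmp l b) * b')"
    by (intro sum.cong refl sum.swap)
  also have "\<dots> = (\<Sum>l\<in>gsupp cmp b. \<Sum>g\<in>gsupp cmp m. \<Sum>h\<in>gsupp cmp a.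
      act (h + g + l) a' * (act g (cmp h a) * cmp g m * cmp l b) * b')"
    by (rule sum.swap)
  also have "\<dots> = (\<Sum>l\<in>gsupp cmp b. \<Sum>g\<in>gsupp cmp m. \<Sum>h\<in>gsupp cmp a.
      act (g + (h + l)) a' * act g (cmp h a) * cmp g m * (cmp l b * b'))"
    by (intro sum.cong refl) (simp add: mult.assoc add.commute add.left_commute)
  also have "\<dots> = (\<Sum>l\<in>gsupp cmp b. reg_action act cmp m (bop act cmp a (act l a')) (cmp l b * b'))"
    by (simp add: reg_action_def bop_def act_sum act_mult act_add_left sum_distrib_right)
  finally show ?thesis
    by (simp add: reg_action_homogeneous_expansion Y_def case_prod_unfold)
qed

lemma is_rmod_reg_action: "is_rmod act cmp K (reg_action act cmp)"
  unfolding is_rmod_def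
proof (intro conjI allI ballI)
  show "reg_action act cmp (n + n') a b = reg_action act cmp n a b + reg_action act cmp n' a b" for n n' a b
    unfolding reg_action_def
    by (rule sum_gsupp_add[where F = "\<lambda>g v. act g a * v * b"]) (simp add: additive_def algebra_simps)
  show "reg_action act cmp n (a + a') b = reg_action act cmp n a b + reg_action act cmp n a' b" for n a a' b
    by (simp add: reg_action_def act_add distrib_right sum.distrib)
  show "reg_action act cmp n a (b + b') = reg_action act cmp n a b + reg_action act cmp n a b'" for n a b b'
    by (simp add: reg_action_def distrib_left sum.distrib)
  show "reg_action act cmp n (bop act cmp a k) b = reg_action act cmp n a (k * b)" if "k \<in> K" for n a b k
    unfolding reg_action_def bop_K[OF that] act_K_mult[OF that]
    by (rule sum.cong) (simp_all add: K_central[OF that] mult.assoc)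
  show "reg_action act cmp n 1 1 = n" for n
    by (simp add: reg_action_def act_one sum_cmp)
qed (rule reg_action_reg_action)

end

context semisimple_YD_basis
begin

definition average :: "('m::ab_group_add \<Rightarrow> 'a \<Rightarrow> 'a \<Rightarrow> 'm) \<Rightarrow> 'm \<Rightarrow> 'm" where
  "average rho n = (\<Sum>i<length bs. rho n (sep_coeff i) (bs ! i))"

lemma rmod_invariant_average:
  assumes rmod: "is_rmod act cmp K rho"
  shows "rmod_invariant rho (average rho n)"
  unfolding rmod_invariant_def
proof
  fix x
  have "rho (average rho n) x 1 = (\<Sum>i<length bs. rho (rho n (sep_coeff i) (bs ! i)) x 1)"
    unfolding average_def by (rule additive.sum[OF additive_rho_module[OF rmod]])
  also have "\<dots> = (\<Sum>i<length bs. rho n (x * sep_coeff i) (bs ! i))"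
  proof (rule sum.cong[OF refl])
    fix i assume "i \<in> {..<length bs}"
    then have i: "i < length bs" by simp
    have "act (- basis_degree i) (act (basis_degree i) x) = x"
      by (simp add: act_add_left[symmetric] act_zero_left)
    then show "rho (rho n (sep_coeff i) (bs ! i)) x 1 = rho n (x * sep_coeff i) (bs ! i)"
      by (simp add: rho_rho_homogeneous[OF rmod homogeneous_nth[OF i]] bop_homogeneous[OF homogeneous_sep_coeff[OF i]])
  qed
  also have "\<dots> = (\<Sum>i<length bs. rho n (sep_coeff i) (bs ! i * x))"
    by (rule sum_balanced_sep_coeff)
      (simp_all add: additive_rho_left[OF rmod] additive_rho_right[OF rmod] rho_K_balanced[OF rmod])
  also have "\<dots> = rho (average rho n) 1 x"
    unfolding average_def additive.sum[OF additive_rho_module[OF rmod]]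
    by (simp add: rho_rho_one_left[OF rmod])
  finally show "rho (average rho n) x 1 = rho (average rho n) 1 x" .
qed

lemma average_eq_if_rmod_invariant:
  assumes rmod: "is_rmod act cmp K rho" and z: "rmod_invariant rho z"
  shows "average rho z = z"
proof -
  have "average rho z = (\<Sum>i<length bs. rho z 1 (sep_coeff i * bs ! i))"
    unfolding average_def by (intro sum.cong refl rmod_invariant_rho[OF rmod z])
  also have "\<dots> = z"
    by (simp add: additive.sum[OF additive_rho_right[OF rmod], symmetric] sum_sep_coeff rho_one_one[OF rmod])
  finally show ?thesis .
qed

lemma rhom_average:
  assumes "rhom rho rho' p"
  shows "p (average rho n) = average rho' (p n)"
proof -
  have "additive p"
    using assms by (simp add: rhom_def additive_def)
  then show ?thesis
    using assms by (simp add: average_def additive.sum rhom_def)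
qed

lemma projective_reg_action:
  "projective_rmod TYPE('m::ab_group_add) TYPE('n::ab_group_add) act cmp K (reg_action act cmp)"
  unfolding projective_rmod_def
proof (intro conjI allI impI)
  show "is_rmod act cmp K (reg_action act cmp)"
    by (rule is_rmod_reg_action)
  fix rhoN :: "'m \<Rightarrow> 'a \<Rightarrow> 'a \<Rightarrow> 'm" and rhoN' :: "'n \<Rightarrow> 'a \<Rightarrow> 'a \<Rightarrow> 'n" and p f
  assume "is_rmod act cmp K rhoN \<and> is_rmod act cmp K rhoN' \<and> rhom rhoN rhoN' p \<and> surj p \<and>
    rhom (reg_action act cmp) rhoN' f"
  then have N: "is_rmod act cmp K rhoN" and N': "is_rmod act cmp K rhoN'"
    and p: "rhom rhoN rhoN' p" "surj p" and f: "rhom (reg_action act cmp) rhoN' f"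
    by blast+
  obtain n where n: "p n = f 1"
    using surjD[OF p(2)] by metis
  define z where "z = average rhoN n"
  have pz: "p z = f 1"
    using rhom_average[OF p(1)] average_eq_if_rmod_invariant[OF N' rmod_invariant_rhom_one[OF f]]
    by (simp add: z_def n)
  have "p (rhoN z 1 x) = f x" for x
    using p(1) pz rhom_reg_action_mult[OF f, of 1 x] unfolding rhom_def by simp
  then show "\<exists>h. rhom (reg_action act cmp) rhoN h \<and> (\<forall>x. p (h x) = f x)"
    using rhom_rmod_invariant[OF N rmod_invariant_average[OF N]] unfolding z_def by blast
qed

end

theorem lemma6p2:
  fixes sc :: "complex \<Rightarrow> 'a::ring_1 \<Rightarrow> 'a"
    and act cmp :: "'g::ab_group_add \<Rightarrow> 'a \<Rightarrow> 'a"
    and K :: "'a set"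
  assumes "YD_algebra sc act cmp"
    and "semisimple_ring TYPE('a)"
    and "central_subfield sc K"
    and "invariant_set act cmp K"
    and "finite_dim_over K"
  shows "projective_rmod TYPE('m::ab_group_add) TYPE('n::ab_group_add) act cmp K (reg_action act cmp)"
proof -
  interpret YD_algebra_over sc act cmp K
    using assms(1,3,4) by unfold_locales
  obtain bs where "is_basis K bs" "\<forall>i<length bs. \<exists>d. homogeneous cmp d (bs ! i)"
    using exists_homogeneous_basis[OF assms(5)] by blast
  then interpret semisimple_YD_basis sc act cmp K bs
    using assms(2) by unfold_locales
  show ?thesis
    by (rule projective_reg_action)
qed

end
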